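(* Fix an integer $\ell\ge2$ and a real $p\in(0,1)$, and let $Y$ be the number of permutations of $G_{k,\ell}(m)$. Then, as $k\to\infty$, \[ \mathbb{E}[Y]\sim (k!)^\ell\, p^{k\ell}\exp\left\{\frac{\ell}{2}\left(1-\frac1p\right)\right\} f_\ell(1/p). \]
   Context: For integers $k\ge1$, $\ell\ge2$, $D_{k,\ell}$ is the digraph with vertex set $\{v_{i,j}: i\in[k], j\in[\ell]\}$ in which $(v_{i,j},v_{i',j'})$ is an arc if and only if $j'\equiv j+1 \pmod \ell$; it has $k^2\ell$ arcs. Given $p\in(0,1)$, let $m=\lfloor pk^2\ell\rfloor$ and let $G_{k,\ell}(m)$ be a spanning subgraph of $D_{k,\ell}$ chosen uniformly at random among those with exactly $m$ arcs. A permutation in a digraph $G=(V,E)$ is a bijection $f:V\to V$ such that for every $v$ either $f(v)=v$ or $(v,f(v))\in E$. $f_\ell(x):=\sum_{i=0}^{\infty}\frac{x^{i\ell}}{(i!)^\ell}$. Asymptotics are as $k\to\infty$ with $\ell,p$ fixed; $A\sim B$ means $A/B\to1$. *)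

theory Defs
  imports "HOL-Probability.Probability" "HOL-Library.Landau_Symbols"
begin

text \<open>Vertex v_{i,j} is represented by the pair (i,j) with i < k, j < l (0-based).\<close>
definition Dverts :: "nat \<Rightarrow> nat \<Rightarrow> (nat \<times> nat) set" where
  "Dverts k l = {..<k} \<times> {..<l}"

definition Darcs :: "nat \<Rightarrow> nat \<Rightarrow> ((nat \<times> nat) \<times> (nat \<times> nat)) set" where
  "Darcs k l = {(u, w). u \<in> Dverts k l \<and> w \<in> Dverts k l \<and> snd w = (snd u + 1) mod l}"

text \<open>Permutations of the digraph (V,E): bijections f of V with f v = v or (v, f v) an arc.
  Functions are taken extensional (undefined outside V) so that they are counted once.\<close>
definition digraph_perms :: "'a set \<Rightarrow> ('a \<times> 'a) set \<Rightarrow> ('a \<Rightarrow> 'a) set" where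
  "digraph_perms V E = {f \<in> V \<rightarrow>\<^sub>E V. bij_betw f V V \<and> (\<forall>v\<in>V. f v = v \<or> (v, f v) \<in> E)}"

text \<open>Spanning subgraphs of D_{k,l} with exactly m arcs (identified with their arc sets).\<close>
definition subgraphs_m :: "nat \<Rightarrow> nat \<Rightarrow> nat \<Rightarrow> ((nat \<times> nat) \<times> (nat \<times> nat)) set set" where
  "subgraphs_m k l m = {E. E \<subseteq> Darcs k l \<and> card E = m}"

definition f_ell :: "nat \<Rightarrow> real \<Rightarrow> real" where
  "f_ell l x = (\<Sum>i. x ^ (i * l) / (fact i) ^ l)"

definition EY :: "nat \<Rightarrow> real \<Rightarrow> nat \<Rightarrow> real" where
  "EY l p k = measure_pmf.expectation
      (pmf_of_set (subgraphs_m k l (nat \<lfloor>p * real (k\<^sup>2 * l)\<rfloor>)))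
      (\<lambda>E. real (card (digraph_perms (Dverts k l) E)))"

end

(*
  A permutation of D(k,l) moves the same number s of vertices in every column and is
  determined by the sets A(0), ..., A(l-1) of moved rows together with the bijections
  A(j) -> A(j+1) it induces; so there are (k choose s)^l (s!)^l of them, each using l s arcs.
  By linearity of expectation, with N = k^2 l,
    E[Y] = sum_s (k choose s)^l (s!)^l C(N - l s, m - l s) / C(N, m).
  Substituting t = k - s gives (k!)^l p^(k l) sum_t (p^(-t) / t!)^l R_k((k - t) l), where
  R_k(n) = C(N - n, m - n) / (p^n C(N, m)) lies in [0,1] and, for n = O(k), equals
  exp(-(1 - p) n^2 / (2 p N) + o(1)); hence R_k((k - t) l) -> exp(l/2 (1 - 1/p)) for each fixed t.
  Tannery's theorem passes the limit through the sum, leaving f_l(1/p).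
*)
theory Submission
  imports Defs "HOL-Real_Asymp.Real_Asymp"
begin

section \<open>Expected number of permutations of a random subgraph\<close>

definition moved :: "'a set \<Rightarrow> ('a \<Rightarrow> 'a) \<Rightarrow> 'a set" where
  "moved V f = {v \<in> V. f v \<noteq> v}"

lemma finite_digraph_perms: "finite V \<Longrightarrow> finite (digraph_perms V E)"
  unfolding digraph_perms_def by (rule finite_subset[of _ "V \<rightarrow>\<^sub>E V"]) (auto simp: finite_PiE)

lemma digraph_perms_subgraph:
  assumes "E \<subseteq> D"
  shows "digraph_perms V E = {f \<in> digraph_perms V D. (\<lambda>v. (v, f v)) ` moved V f \<subseteq> E}"
  using assms unfolding digraph_perms_def moved_def by auto

lemma card_supersets_of_card:
  assumes D: "finite D" and B: "B \<subseteq> D" "card B \<le> m"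
  shows "card {E. (E \<subseteq> D \<and> card E = m) \<and> B \<subseteq> E} = (card D - card B) choose (m - card B)"
proof -
  have fB: "finite B" using D B finite_subset by blast
  have "bij_betw (\<lambda>E. E - B) {E. (E \<subseteq> D \<and> card E = m) \<and> B \<subseteq> E} {F. F \<subseteq> D - B \<and> card F = m - card B}"
  proof (rule bij_betw_byWitness[where f'="\<lambda>F. F \<union> B"])
    show "(\<lambda>E. E - B) ` {E. (E \<subseteq> D \<and> card E = m) \<and> B \<subseteq> E} \<subseteq> {F. F \<subseteq> D - B \<and> card F = m - card B}"
      using fB by (auto simp: card_Diff_subset)
    show "(\<lambda>F. F \<union> B) ` {F. F \<subseteq> D - B \<and> card F = m - card B} \<subseteq> {E. (E \<subseteq> D \<and> card E = m) \<and> B \<subseteq> E}"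
    proof (rule image_subsetI)
      fix F assume F: "F \<in> {F. F \<subseteq> D - B \<and> card F = m - card B}"
      then have "finite F" using D finite_subset by blast
      with F fB have "card (F \<union> B) = card F + card B" by (subst card_Un_disjoint) auto
      with F B show "F \<union> B \<in> {E. (E \<subseteq> D \<and> card E = m) \<and> B \<subseteq> E}" by auto
    qed
  qed auto
  then have "card {E. (E \<subseteq> D \<and> card E = m) \<and> B \<subseteq> E} = card {F. F \<subseteq> D - B \<and> card F = m - card B}"
    by (rule bij_betw_same_card)
  also have "\<dots> = card (D - B) choose (m - card B)" using D by (simp add: n_subsets)
  also have "card (D - B) = card D - card B" using B fB by (simp add: card_Diff_subset)
  finally show ?thesis .
qed

text \<open>Double counting: \<open>f\<close> is a permutation of \<open>E \<subseteq> D\<close> iff the arcs it uses lie in \<open>E\<close>,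
  and these are contained in exactly \<open>card D - j choose m - j\<close> of the \<open>m\<close>-subsets of \<open>D\<close>,
  \<open>j\<close> being the number of vertices \<open>f\<close> moves.\<close>
lemma expectation_card_digraph_perms:
  assumes V: "finite V" and D: "D \<subseteq> V \<times> V" and m: "card V \<le> m" "m \<le> card D"
  shows "measure_pmf.expectation (pmf_of_set {E. E \<subseteq> D \<and> card E = m})
      (\<lambda>E. real (card (digraph_perms V E)))
    = (\<Sum>f\<in>digraph_perms V D. real ((card D - card (moved V f)) choose (m - card (moved V f))))
      / real (card D choose m)"
proof -
  let ?S = "{E. E \<subseteq> D \<and> card E = m}" and ?P = "digraph_perms V D"
  let ?arcs = "\<lambda>f. (\<lambda>v. (v, f v)) ` moved V f"
  have finD: "finite D" using V D finite_subset by blast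
  have finS: "finite ?S" using finD by (auto intro: finite_subset[of _ "Pow D"])
  have cardS: "card ?S = card D choose m" using finD by (simp add: n_subsets)
  then have "?S \<noteq> {}" using m(2) by (metis card.empty zero_less_binomial_iff not_less0)
  then have "measure_pmf.expectation (pmf_of_set ?S) (\<lambda>E. real (card (digraph_perms V E)))
      = (\<Sum>E\<in>?S. real (card (digraph_perms V E))) / real (card ?S)"
    by (simp add: integral_pmf_of_set finS)
  also have "(\<Sum>E\<in>?S. real (card (digraph_perms V E))) = real (\<Sum>E\<in>?S. card {f \<in> ?P. ?arcs f \<subseteq> E})"
    unfolding of_nat_sum
    by (intro sum.cong refl arg_cong[where f = "\<lambda>A. real (card A)"] digraph_perms_subgraph) simp
  also have "(\<Sum>E\<in>?S. card {f \<in> ?P. ?arcs f \<subseteq> E}) = (\<Sum>f\<in>?P. card {E \<in> ?S. ?arcs f \<subseteq> E})"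
    using sum.swap_restrict[OF finS finite_digraph_perms[OF V],
        where g = "\<lambda>_ _. 1::nat" and R = "\<lambda>E f. ?arcs f \<subseteq> E"]
    by simp
  also have "\<dots> = (\<Sum>f\<in>?P. (card D - card (moved V f)) choose (m - card (moved V f)))"
  proof (rule sum.cong[OF refl])
    fix f assume f: "f \<in> ?P"
    have card_arcs: "card (?arcs f) = card (moved V f)"
      by (rule card_image) (auto simp: inj_on_def)
    have "card (moved V f) \<le> card V" using V by (intro card_mono) (auto simp: moved_def)
    then have "card (?arcs f) \<le> m" using card_arcs m(1) by simp
    moreover have "?arcs f \<subseteq> D" using f unfolding digraph_perms_def moved_def by auto
    ultimately show "card {E \<in> ?S. ?arcs f \<subseteq> E} = (card D - card (moved V f)) choose (m - card (moved V f))"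
      using card_supersets_of_card[OF finD] card_arcs by simp
  qed
  finally show ?thesis unfolding cardS by simp
qed

section \<open>Counting the permutations of \<open>D\<^sub>k\<^sub>,\<^sub>l\<close>\<close>

lemma finite_Dverts [simp]: "finite (Dverts k l)"
  unfolding Dverts_def by simp

lemma card_Dverts: "card (Dverts k l) = k * l"
  unfolding Dverts_def by (simp add: card_cartesian_product)

lemma Darcs_subset: "Darcs k l \<subseteq> Dverts k l \<times> Dverts k l"
  unfolding Darcs_def by auto

lemma card_Darcs:
  assumes "0 < l"
  shows "card (Darcs k l) = k\<^sup>2 * l"
proof -
  have "bij_betw (\<lambda>(u, w). (u, fst w)) (Darcs k l) (Dverts k l \<times> {..<k})"
    by (rule bij_betw_byWitness[where f' = "\<lambda>(u, i). (u, (i, (snd u + 1) mod l))"])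
      (use assms in \<open>auto simp: Darcs_def Dverts_def\<close>)
  then have "card (Darcs k l) = card (Dverts k l \<times> {..<k})" by (rule bij_betw_same_card)
  also have "\<dots> = k\<^sup>2 * l" by (simp add: card_cartesian_product card_Dverts power2_eq_square)
  finally show ?thesis .
qed

definition injections :: "'a set \<Rightarrow> 'b set \<Rightarrow> ('a \<Rightarrow> 'b) set" where
  "injections X Y = {g \<in> X \<rightarrow>\<^sub>E Y. inj_on g X}"

lemma finite_injections [simp]: "finite X \<Longrightarrow> finite Y \<Longrightarrow> finite (injections X Y)"
  unfolding injections_def by (simp add: finite_PiE)

lemma card_injections_same_card:
  assumes "finite X" "finite Y" "card X = s" "card Y = s"
  shows "card (injections X Y) = fact s"
proof -
  have "card (injections X Y) = card Y ^ (card X - card X) * prod ((-) (card Y)) {0..<card X}"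
    unfolding injections_def by (rule card_inj_on_subset_funcset) (use assms in auto)
  also have "\<dots> = fact s" using assms by (simp add: fact_prod_rev)
  finally show ?thesis .
qed

lemma Suc_mod_neq_self: "2 \<le> l \<Longrightarrow> j < l \<Longrightarrow> Suc j mod l \<noteq> j"
  by (auto simp: mod_Suc)

lemma Suc_mod_inj: "a < l \<Longrightarrow> b < l \<Longrightarrow> Suc a mod l = Suc b mod l \<Longrightarrow> a = b"
  by (auto simp: mod_Suc split: if_splits)

abbreviation Dperms :: "nat \<Rightarrow> nat \<Rightarrow> ((nat \<times> nat) \<Rightarrow> (nat \<times> nat)) set" where
  "Dperms k l \<equiv> digraph_perms (Dverts k l) (Darcs k l)"

definition moving_rows :: "nat \<Rightarrow> ((nat \<times> nat) \<Rightarrow> (nat \<times> nat)) \<Rightarrow> nat \<Rightarrow> nat set" where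
  "moving_rows k f j = {i. i < k \<and> f (i, j) \<noteq> (i, j)}"

lemma DpermsD:
  assumes "f \<in> Dperms k l"
  shows "f \<in> Dverts k l \<rightarrow>\<^sub>E Dverts k l" "inj_on f (Dverts k l)" "f ` Dverts k l = Dverts k l"
    "\<And>v. v \<in> Dverts k l \<Longrightarrow> f v = v \<or> (v, f v) \<in> Darcs k l"
  using assms unfolding digraph_perms_def bij_betw_def by auto

lemma moving_row_step:
  assumes f: "f \<in> Dperms k l" and i: "i \<in> moving_rows k f j" and j: "j < l"
  shows "f (i, j) = (fst (f (i, j)), Suc j mod l)" "fst (f (i, j)) < k"
proof -
  have "(i, j) \<in> Dverts k l" using i j unfolding moving_rows_def Dverts_def by auto
  then have "((i, j), f (i, j)) \<in> Darcs k l" using DpermsD(4)[OF f] i unfolding moving_rows_def by auto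
  then show "f (i, j) = (fst (f (i, j)), Suc j mod l)" "fst (f (i, j)) < k"
    unfolding Darcs_def Dverts_def by auto
qed

lemma bij_betw_moving_rows:
  assumes f: "f \<in> Dperms k l" and l: "2 \<le> l" and j: "j < l"
  shows "bij_betw (\<lambda>i. fst (f (i, j))) (moving_rows k f j) (moving_rows k f (Suc j mod l))"
proof -
  note fD = DpermsD[OF f]
  let ?j' = "Suc j mod l"
  have into: "fst (f (i, j)) \<in> moving_rows k f ?j'" if i: "i \<in> moving_rows k f j" for i
  proof -
    let ?w = "f (i, j)"
    have v: "(i, j) \<in> Dverts k l" using i j unfolding moving_rows_def Dverts_def by auto
    have w: "?w = (fst ?w, ?j')" "fst ?w < k" using moving_row_step[OF f i j] by auto
    have "f ?w \<noteq> ?w"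
    proof
      assume "f ?w = ?w"
      moreover have "?w \<in> Dverts k l" using v fD(1) by auto
      ultimately have "?w = (i, j)" using fD(2) v by (auto dest: inj_onD)
      then show False using i unfolding moving_rows_def by auto
    qed
    then show ?thesis using w unfolding moving_rows_def by (metis (mono_tags, lifting) mem_Collect_eq)
  qed
  have inj: "inj_on (\<lambda>i. fst (f (i, j))) (moving_rows k f j)"
  proof (rule inj_onI)
    fix a b assume a: "a \<in> moving_rows k f j" and b: "b \<in> moving_rows k f j"
      and eq: "fst (f (a, j)) = fst (f (b, j))"
    have "f (a, j) = f (b, j)" using moving_row_step(1)[OF f a j] moving_row_step(1)[OF f b j] eq by metis
    moreover have "(a, j) \<in> Dverts k l" "(b, j) \<in> Dverts k l"
      using a b j unfolding moving_rows_def Dverts_def by auto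
    ultimately show "a = b" using fD(2) by (auto dest: inj_onD)
  qed
  have onto: "moving_rows k f ?j' \<subseteq> (\<lambda>i. fst (f (i, j))) ` moving_rows k f j"
  proof
    fix i' assume i': "i' \<in> moving_rows k f ?j'"
    have "(i', ?j') \<in> Dverts k l" using i' l unfolding moving_rows_def Dverts_def by auto
    then obtain u where u: "u \<in> Dverts k l" "f u = (i', ?j')" using fD(3) by (metis imageE)
    have "u \<noteq> (i', ?j')" using u i' unfolding moving_rows_def by auto
    then have "(u, f u) \<in> Darcs k l" using fD(4)[OF u(1)] u(2) by auto
    then have "Suc (snd u) mod l = ?j'" "snd u < l" using u unfolding Darcs_def Dverts_def by auto
    then have "snd u = j" using Suc_mod_inj j by blast
    then have "fst u \<in> moving_rows k f j" "fst (f (fst u, j)) = i'"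
      using u \<open>u \<noteq> (i', ?j')\<close> unfolding moving_rows_def Dverts_def by (cases u, auto)+
    then show "i' \<in> (\<lambda>i. fst (f (i, j))) ` moving_rows k f j" by (metis image_eqI)
  qed
  show ?thesis unfolding bij_betw_def using inj into onto by auto
qed

lemma card_moving_rows:
  assumes f: "f \<in> Dperms k l" and l: "2 \<le> l" and j: "j < l"
  shows "card (moving_rows k f j) = card (moving_rows k f 0)"
  using j
proof (induction j)
  case (Suc j)
  then have "card (moving_rows k f (Suc j)) = card (moving_rows k f j)"
    using bij_betw_same_card[OF bij_betw_moving_rows[OF f l, of j]] by simp
  with Suc show ?case by simp
qed simp

text \<open>A permutation of \<open>D\<^sub>k\<^sub>,\<^sub>l\<close> is encoded by the sets \<open>A j\<close> of rows it moves in column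
  \<open>j\<close> (all of the same size \<open>s\<close>) and the injections \<open>A j \<rightarrow> A (j + 1)\<close> it induces.\<close>
definition cycle_data :: "nat \<Rightarrow> nat \<Rightarrow> nat \<Rightarrow> ((nat \<Rightarrow> nat set) \<times> (nat \<Rightarrow> nat \<Rightarrow> nat)) set" where
  "cycle_data k l s = (SIGMA A : {..<l} \<rightarrow>\<^sub>E {B. B \<subseteq> {..<k} \<and> card B = s}.
     \<Pi>\<^sub>E j\<in>{..<l}. injections (A j) (A (Suc j mod l)))"

definition perm_of_cycle_data ::
    "nat \<Rightarrow> nat \<Rightarrow> (nat \<Rightarrow> nat set) \<times> (nat \<Rightarrow> nat \<Rightarrow> nat) \<Rightarrow> (nat \<times> nat) \<Rightarrow> (nat \<times> nat)" where
  "perm_of_cycle_data k l = (\<lambda>(A, \<sigma>). \<lambda>v\<in>Dverts k l.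
     if fst v \<in> A (snd v) then (\<sigma> (snd v) (fst v), Suc (snd v) mod l) else v)"

definition cycle_data_of_perm ::
    "nat \<Rightarrow> nat \<Rightarrow> ((nat \<times> nat) \<Rightarrow> (nat \<times> nat)) \<Rightarrow> (nat \<Rightarrow> nat set) \<times> (nat \<Rightarrow> nat \<Rightarrow> nat)" where
  "cycle_data_of_perm k l f =
     (\<lambda>j\<in>{..<l}. moving_rows k f j, \<lambda>j\<in>{..<l}. \<lambda>i\<in>moving_rows k f j. fst (f (i, j)))"

definition Dperms_moving :: "nat \<Rightarrow> nat \<Rightarrow> nat \<Rightarrow> ((nat \<times> nat) \<Rightarrow> (nat \<times> nat)) set" where
  "Dperms_moving k l s = {f \<in> Dperms k l. card (moving_rows k f 0) = s}"

lemma cycle_dataD: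
  assumes "(A, \<sigma>) \<in> cycle_data k l s" "j < l"
  shows "A j \<subseteq> {..<k}" "card (A j) = s" "\<And>i. i \<in> A j \<Longrightarrow> \<sigma> j i \<in> A (Suc j mod l)"
    "inj_on (\<sigma> j) (A j)" "A \<in> extensional {..<l}" "\<sigma> \<in> extensional {..<l}" "\<sigma> j \<in> extensional (A j)"
  using assms unfolding cycle_data_def injections_def by (auto simp: PiE_def Pi_def)

lemma perm_of_cycle_data_apply:
  "(i, j) \<in> Dverts k l \<Longrightarrow>
    perm_of_cycle_data k l (A, \<sigma>) (i, j) = (if i \<in> A j then (\<sigma> j i, Suc j mod l) else (i, j))"
  unfolding perm_of_cycle_data_def by simp

lemma perm_of_cycle_data_in_Dverts:
  assumes c: "(A, \<sigma>) \<in> cycle_data k l s" and l: "2 \<le> l" and v: "v \<in> Dverts k l"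
  shows "perm_of_cycle_data k l (A, \<sigma>) v \<in> Dverts k l"
proof (cases v)
  case (Pair i j)
  then have j: "j < l" using v unfolding Dverts_def by auto
  have "Suc j mod l < l" using l by simp
  then show ?thesis
    using v cycle_dataD(1)[OF c \<open>Suc j mod l < l\<close>] cycle_dataD(3)[OF c j]
    unfolding Pair perm_of_cycle_data_apply[OF v[unfolded Pair]] by (auto simp: Dverts_def)
qed

lemma inj_on_perm_of_cycle_data:
  assumes c: "(A, \<sigma>) \<in> cycle_data k l s"
  shows "inj_on (perm_of_cycle_data k l (A, \<sigma>)) (Dverts k l)"
proof (rule inj_onI)
  fix u w assume u: "u \<in> Dverts k l" and w: "w \<in> Dverts k l"
    and eq: "perm_of_cycle_data k l (A, \<sigma>) u = perm_of_cycle_data k l (A, \<sigma>) w"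
  obtain i j i' j' where uw: "u = (i, j)" "w = (i', j')" by (cases u, cases w)
  have jl: "j < l" "j' < l" using u w uw unfolding Dverts_def by auto
  have eq': "(if i \<in> A j then (\<sigma> j i, Suc j mod l) else (i, j))
      = (if i' \<in> A j' then (\<sigma> j' i', Suc j' mod l) else (i', j'))"
    using eq u w unfolding uw by (simp add: perm_of_cycle_data_apply)
  show "u = w"
  proof (cases "i \<in> A j"; cases "i' \<in> A j'")
    assume "i \<in> A j" "i' \<in> A j'"
    moreover from this have "j = j'" "\<sigma> j i = \<sigma> j i'" using eq' Suc_mod_inj jl by auto
    ultimately show ?thesis using cycle_dataD(4)[OF c jl(1)] uw by (auto dest: inj_onD)
  qed (use eq' cycle_dataD(3)[OF c jl(1)] cycle_dataD(3)[OF c jl(2)] uw in auto)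
qed

lemma perm_of_cycle_data_Dperms:
  assumes c: "(A, \<sigma>) \<in> cycle_data k l s" and l: "2 \<le> l"
  shows "perm_of_cycle_data k l (A, \<sigma>) \<in> Dperms k l"
proof -
  let ?F = "perm_of_cycle_data k l (A, \<sigma>)"
  have into: "?F v \<in> Dverts k l" if "v \<in> Dverts k l" for v
    using perm_of_cycle_data_in_Dverts[OF c l that] .
  have inj: "inj_on ?F (Dverts k l)" by (rule inj_on_perm_of_cycle_data[OF c])
  have "?F ` Dverts k l = Dverts k l" by (rule endo_inj_surj) (use into inj in auto)
  moreover have "?F v = v \<or> (v, ?F v) \<in> Darcs k l" if v: "v \<in> Dverts k l" for v
    using into[OF v] v by (cases v) (auto simp: Darcs_def perm_of_cycle_data_apply)
  moreover have "?F \<in> extensional (Dverts k l)" unfolding perm_of_cycle_data_def by simp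
  ultimately show ?thesis
    unfolding digraph_perms_def bij_betw_def using into inj by (auto simp: PiE_def Pi_def)
qed

lemma moving_rows_perm_of_cycle_data:
  assumes c: "(A, \<sigma>) \<in> cycle_data k l s" and l: "2 \<le> l" and j: "j < l"
  shows "moving_rows k (perm_of_cycle_data k l (A, \<sigma>)) j = A j"
  using cycle_dataD(1,3)[OF c j] Suc_mod_neq_self[OF l j] j
  unfolding moving_rows_def perm_of_cycle_data_def Dverts_def by auto

lemma cycle_data_of_perm_of_cycle_data:
  assumes c: "(A, \<sigma>) \<in> cycle_data k l s" and l: "2 \<le> l"
  shows "cycle_data_of_perm k l (perm_of_cycle_data k l (A, \<sigma>)) = (A, \<sigma>)"
proof -
  let ?F = "perm_of_cycle_data k l (A, \<sigma>)"
  have "(\<lambda>j\<in>{..<l}. moving_rows k ?F j) = A"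
  proof (intro ext)
    fix j
    show "(\<lambda>j\<in>{..<l}. moving_rows k ?F j) j = A j"
      using moving_rows_perm_of_cycle_data[OF c l] extensional_arb[OF cycle_dataD(5)[OF c, of 0]] l
      by (cases "j < l") auto
  qed
  moreover have "(\<lambda>j\<in>{..<l}. \<lambda>i\<in>moving_rows k ?F j. fst (?F (i, j))) = \<sigma>"
  proof (intro ext)
    fix j i
    show "(\<lambda>j\<in>{..<l}. \<lambda>i\<in>moving_rows k ?F j. fst (?F (i, j))) j i = \<sigma> j i"
    proof (cases "j < l")
      case True
      then show ?thesis
        using moving_rows_perm_of_cycle_data[OF c l True] cycle_dataD(1,7)[OF c True]
        unfolding perm_of_cycle_data_def Dverts_def by (auto simp: extensional_def)
    qed (use extensional_arb[OF cycle_dataD(6)[OF c, of 0]] l in simp)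
  qed
  ultimately show ?thesis unfolding cycle_data_of_perm_def by simp
qed

lemma perm_of_cycle_data_of_perm:
  assumes f: "f \<in> Dperms k l"
  shows "perm_of_cycle_data k l (cycle_data_of_perm k l f) = f"
proof
  fix v
  show "perm_of_cycle_data k l (cycle_data_of_perm k l f) v = f v"
  proof (cases "v \<in> Dverts k l")
    case True
    obtain i j where v: "v = (i, j)" by (cases v)
    have "j < l" using True v unfolding Dverts_def by auto
    then show ?thesis
      using moving_row_step(1)[OF f _ \<open>j < l\<close>] True
      unfolding v perm_of_cycle_data_def cycle_data_of_perm_def moving_rows_def Dverts_def by auto
  qed (use PiE_arb[OF DpermsD(1)[OF f]] in \<open>simp add: perm_of_cycle_data_def cycle_data_of_perm_def\<close>)
qed

lemma cycle_data_of_perm_in_cycle_data: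
  assumes f: "f \<in> Dperms_moving k l s" and l: "2 \<le> l"
  shows "cycle_data_of_perm k l f \<in> cycle_data k l s"
proof -
  have fD: "f \<in> Dperms k l" and s: "card (moving_rows k f 0) = s"
    using f unfolding Dperms_moving_def by auto
  have "(\<lambda>i\<in>moving_rows k f j. fst (f (i, j))) \<in> injections (moving_rows k f j) (moving_rows k f (Suc j mod l))"
    if "j < l" for j
    using bij_betw_moving_rows[OF fD l that] unfolding injections_def bij_betw_def by auto
  moreover have "(\<lambda>j\<in>{..<l}. moving_rows k f j) \<in> {..<l} \<rightarrow>\<^sub>E {B. B \<subseteq> {..<k} \<and> card B = s}"
    using card_moving_rows[OF fD l] s unfolding moving_rows_def by auto
  ultimately show ?thesis using l unfolding cycle_data_def cycle_data_of_perm_def by auto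
qed

lemma perm_of_cycle_data_in_Dperms_moving:
  assumes c: "x \<in> cycle_data k l s" and l: "2 \<le> l"
  shows "perm_of_cycle_data k l x \<in> Dperms_moving k l s"
proof -
  obtain A \<sigma> where x: "x = (A, \<sigma>)" by (cases x)
  show ?thesis
    using perm_of_cycle_data_Dperms[OF c[unfolded x] l] moving_rows_perm_of_cycle_data[OF c[unfolded x] l]
      cycle_dataD(2)[OF c[unfolded x]] l
    unfolding x Dperms_moving_def by simp
qed

lemma card_cycle_data: "card (cycle_data k l s) = (k choose s) ^ l * fact s ^ l"
proof -
  let ?subsets = "{..<l} \<rightarrow>\<^sub>E {B. B \<subseteq> {..<k} \<and> card B = s}"
  have finite_A: "finite (A j)" if "A \<in> ?subsets" "j < l" for A j
    using that by (auto intro: finite_subset[of _ "{..<k}"])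
  have "card (cycle_data k l s) = (\<Sum>A\<in>?subsets. card (\<Pi>\<^sub>E j\<in>{..<l}. injections (A j) (A (Suc j mod l))))"
    unfolding cycle_data_def
    by (rule card_SigmaI) (use finite_A in \<open>auto intro!: finite_PiE finite_injections\<close>)
  also have "\<dots> = (\<Sum>A\<in>?subsets. fact s ^ l)"
  proof (rule sum.cong[OF refl])
    fix A assume A: "A \<in> ?subsets"
    have "card (injections (A j) (A (Suc j mod l))) = fact s" if "j < l" for j
    proof -
      have "A j \<in> {B. B \<subseteq> {..<k} \<and> card B = s}" "A (Suc j mod l) \<in> {B. B \<subseteq> {..<k} \<and> card B = s}"
        using A that by auto
      then show ?thesis by (intro card_injections_same_card) (auto intro: finite_subset)
    qed
    then show "card (\<Pi>\<^sub>E j\<in>{..<l}. injections (A j) (A (Suc j mod l))) = fact s ^ l"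
      by (simp add: card_PiE)
  qed
  also have "\<dots> = (k choose s) ^ l * fact s ^ l"
    by (simp add: card_PiE n_subsets)
  finally show ?thesis .
qed

lemma card_Dperms_moving:
  assumes "2 \<le> l"
  shows "card (Dperms_moving k l s) = (k choose s) ^ l * fact s ^ l"
proof -
  have "bij_betw (perm_of_cycle_data k l) (cycle_data k l s) (Dperms_moving k l s)"
    by (rule bij_betw_byWitness[where f' = "cycle_data_of_perm k l"])
      (use assms cycle_data_of_perm_of_cycle_data perm_of_cycle_data_of_perm
        perm_of_cycle_data_in_Dperms_moving cycle_data_of_perm_in_cycle_data
        in \<open>force simp: Dperms_moving_def\<close>)+
  then show ?thesis using card_cycle_data by (metis bij_betw_same_card)
qed

lemma card_moved_Dperms_moving:
  assumes f: "f \<in> Dperms_moving k l s" and l: "2 \<le> l"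
  shows "card (moved (Dverts k l) f) = l * s"
proof -
  have fD: "f \<in> Dperms k l" and s: "card (moving_rows k f 0) = s"
    using f unfolding Dperms_moving_def by auto
  have "moved (Dverts k l) f = (\<lambda>(j, i). (i, j)) ` (SIGMA j:{..<l}. moving_rows k f j)"
    unfolding moved_def moving_rows_def Dverts_def by force
  moreover have "inj_on (\<lambda>(j, i). (i, j)) (SIGMA j:{..<l}. moving_rows k f j)"
    by (auto simp: inj_on_def)
  ultimately have "card (moved (Dverts k l) f) = card (SIGMA j:{..<l}. moving_rows k f j)"
    by (simp add: card_image)
  also have "\<dots> = (\<Sum>j<l. card (moving_rows k f j))"
    by (rule card_SigmaI) (auto simp: moving_rows_def)
  also have "\<dots> = l * s" using card_moving_rows[OF fD l] s by simp
  finally show ?thesis .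
qed

lemma sum_Dperms_moved:
  fixes h :: "nat \<Rightarrow> real"
  assumes l: "2 \<le> l"
  shows "(\<Sum>f\<in>Dperms k l. h (card (moved (Dverts k l) f)))
    = (\<Sum>s\<le>k. real ((k choose s) ^ l * fact s ^ l) * h (l * s))"
proof -
  have "card (moving_rows k f 0) \<in> {..k}" for f
    using card_mono[of "{..<k}" "moving_rows k f 0"] unfolding moving_rows_def by auto
  then have "(\<Sum>f\<in>Dperms k l. h (card (moved (Dverts k l) f)))
      = (\<Sum>s\<le>k. \<Sum>f\<in>Dperms_moving k l s. h (card (moved (Dverts k l) f)))"
    unfolding Dperms_moving_def
    by (intro sum.group[symmetric] finite_digraph_perms finite_Dverts) auto
  also have "\<dots> = (\<Sum>s\<le>k. \<Sum>f\<in>Dperms_moving k l s. h (l * s))"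
    using card_moved_Dperms_moving[OF _ l] by simp
  also have "\<dots> = (\<Sum>s\<le>k. real ((k choose s) ^ l * fact s ^ l) * h (l * s))"
    using card_Dperms_moving[OF l] by simp
  finally show ?thesis .
qed

section \<open>Ratios of binomial coefficients\<close>

lemma binomial_ratio_eq_prod:
  assumes "n \<le> m" "m \<le> N"
  shows "real ((N - n) choose (m - n)) / real (N choose m) = (\<Prod>i<n. (real m - real i) / (real N - real i))"
  using assms(1)
proof (induction n)
  case 0
  then show ?case using assms(2) by simp
next
  case (Suc n)
  then have nm: "n < m" by simp
  have "(m - n) * ((N - n) choose (m - n)) = (N - n) * ((N - n - 1) choose (m - Suc n))"
    using binomial_absorption[of "m - Suc n" "N - n"] nm by (simp add: Suc_diff_Suc)
  then have "real (m - n) * real ((N - n) choose (m - n))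
      = real (N - n) * real ((N - Suc n) choose (m - Suc n))"
    by (simp flip: of_nat_mult)
  moreover have "real (m - n) = real m - real n" "real (N - n) = real N - real n"
    using nm assms(2) by (auto simp: of_nat_diff)
  ultimately have "(real m - real n) * real ((N - n) choose (m - n))
      = (real N - real n) * real ((N - Suc n) choose (m - Suc n))"
    by simp
  moreover have "real N - real n > 0" using nm assms(2) by simp
  ultimately have "real ((N - Suc n) choose (m - Suc n))
      = real ((N - n) choose (m - n)) * ((real m - real n) / (real N - real n))"
    by (simp add: field_simps)
  then have "real ((N - Suc n) choose (m - Suc n)) / real (N choose m)
      = real ((N - n) choose (m - n)) / real (N choose m) * ((real m - real n) / (real N - real n))"
    by simp
  then show ?case using Suc.IH nm by simp
qed

text \<open>For naturals \<open>n \<le> m \<le> N\<close>, \<open>p ^ n * falling_ratio p m N n = (N - n choose m - n) / (N choose m)\<close>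
  is the probability that a uniformly random \<open>m\<close>-subset of an \<open>N\<close>-set contains \<open>n\<close> given
  elements; for \<open>m \<approx> p N\<close> it is close to \<open>p ^ n\<close>.\<close>
definition falling_ratio :: "real \<Rightarrow> real \<Rightarrow> real \<Rightarrow> nat \<Rightarrow> real" where
  "falling_ratio p m N n = (\<Prod>i<n. (m - real i) / (p * (N - real i)))"

lemma prod_ratio_eq_falling_ratio:
  assumes "p \<noteq> 0"
  shows "(\<Prod>i<n. (m - real i) / (N - real i)) = p ^ n * falling_ratio p m N n"
proof -
  have factor: "(m - real i) / (N - real i) = p * ((m - real i) / (p * (N - real i)))" for i
    using assms by simp
  show ?thesis unfolding factor prod.distrib falling_ratio_def by simp
qed

lemma falling_ratio_nonneg_le_one:
  assumes p: "0 < p" "p \<le> 1" and m: "m \<le> p * N" "real n \<le> m"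
  shows "0 \<le> falling_ratio p m N n" "falling_ratio p m N n \<le> 1"
proof -
  have factor: "0 \<le> (m - real i) / (p * (N - real i)) \<and> (m - real i) / (p * (N - real i)) \<le> 1"
    if "i < n" for i
  proof -
    have "real i < m" using that m(2) by linarith
    have "p * real i \<le> real i" using p by (simp add: mult_left_le_one_le)
    then have le: "m - real i \<le> p * (N - real i)" using m(1) by (simp add: algebra_simps)
    with \<open>real i < m\<close> have "0 < p * (N - real i)" by linarith
    with le \<open>real i < m\<close> show ?thesis by simp
  qed
  show "0 \<le> falling_ratio p m N n" "falling_ratio p m N n \<le> 1"
    unfolding falling_ratio_def using factor by (auto intro: prod_nonneg prod_le_1)
qed

lemma sum_lessThan_of_nat: "(\<Sum>i<n. real i) = real n * (real n - 1) / 2"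
  by (induction n) (auto simp: field_simps)

lemma prod_one_minus_exp_bounds:
  fixes y :: "nat \<Rightarrow> real"
  assumes "\<And>i. i < n \<Longrightarrow> 0 \<le> y i \<and> y i \<le> 1/2"
  shows "exp (-(\<Sum>i<n. y i) - 2 * (\<Sum>i<n. (y i)\<^sup>2)) \<le> (\<Prod>i<n. 1 - y i)"
    and "(\<Prod>i<n. 1 - y i) \<le> exp (-(\<Sum>i<n. y i))"
proof -
  have "exp (-(\<Sum>i<n. y i) - 2 * (\<Sum>i<n. (y i)\<^sup>2)) = (\<Prod>i<n. exp (- y i - 2 * (y i)\<^sup>2))"
    by (simp add: exp_sum[symmetric] sum_subtractf sum_distrib_left sum_negf)
  also have "\<dots> \<le> (\<Prod>i<n. 1 - y i)"
  proof (rule prod_mono)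
    fix i assume "i \<in> {..<n}"
    with assms have y: "0 \<le> y i" "y i \<le> 1/2" by auto
    have "exp (- y i - 2 * (y i)\<^sup>2) \<le> exp (ln (1 - y i))"
      using ln_one_minus_pos_lower_bound[OF y] by simp
    with y show "0 \<le> exp (- y i - 2 * (y i)\<^sup>2) \<and> exp (- y i - 2 * (y i)\<^sup>2) \<le> 1 - y i"
      by simp
  qed
  finally show "exp (-(\<Sum>i<n. y i) - 2 * (\<Sum>i<n. (y i)\<^sup>2)) \<le> (\<Prod>i<n. 1 - y i)" .
  have "(\<Prod>i<n. 1 - y i) \<le> (\<Prod>i<n. exp (- y i))"
  proof (rule prod_mono)
    fix i assume "i \<in> {..<n}"
    with assms have "y i \<le> 1/2" by auto
    then show "0 \<le> 1 - y i \<and> 1 - y i \<le> exp (- y i)"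
      using exp_ge_add_one_self[of "- y i"] by simp
  qed
  also have "\<dots> = exp (-(\<Sum>i<n. y i))"
    by (simp add: exp_sum[symmetric] sum_negf)
  finally show "(\<Prod>i<n. 1 - y i) \<le> exp (-(\<Sum>i<n. y i))" .
qed

lemma falling_ratio_factor_bounds:
  assumes p: "0 < p" "p \<le> 1" and m: "m \<le> p * N" "p * N - 1 \<le> m" and i: "real i < K" "K < N"
  defines "y \<equiv> 1 - (m - real i) / (p * (N - real i))"
  shows "real i * (1 - p) / (p * N) \<le> y" and "y \<le> (1 + real i * (1 - p)) / (p * (N - K))"
    and "0 \<le> y"
proof -
  have Ni: "0 < N - real i" using i by simp
  have y_eq: "y = ((p * N - m) + real i * (1 - p)) / (p * (N - real i))"
    unfolding y_def using Ni p by (simp add: field_simps)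
  have "real i * (1 - p) / (p * N) \<le> real i * (1 - p) / (p * (N - real i))"
    using Ni p by (intro divide_left_mono mult_nonneg_nonneg mult_pos_pos) auto
  also have "\<dots> \<le> y" unfolding y_eq using Ni p m by (intro divide_right_mono) auto
  finally show "real i * (1 - p) / (p * N) \<le> y" .
  have "y \<le> (1 + real i * (1 - p)) / (p * (N - real i))"
    unfolding y_eq using Ni p m by (intro divide_right_mono) auto
  also have "\<dots> \<le> (1 + real i * (1 - p)) / (p * (N - K))"
    using Ni p i by (intro divide_left_mono mult_left_mono mult_pos_pos add_nonneg_nonneg) auto
  finally show "y \<le> (1 + real i * (1 - p)) / (p * (N - K))" .
  show "0 \<le> y" unfolding y_eq using Ni p m by simp
qed

lemma falling_ratio_bounds:
  assumes p: "0 < p" "p \<le> 1" and m: "m \<le> p * N" "p * N - 1 \<le> m" and n: "real n \<le> K" "K < N"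
    and small: "(1 + K) / (p * (N - K)) \<le> 1/2"
  shows "exp (- ((real n + (1 - p) * (real n * (real n - 1) / 2)) / (p * (N - K)))
            - 2 * K * ((1 + K) / (p * (N - K)))\<^sup>2) \<le> falling_ratio p m N n"
    and "falling_ratio p m N n \<le> exp (- ((1 - p) * (real n * (real n - 1) / 2) / (p * N)))"
proof -
  define \<delta> where "\<delta> = (1 + K) / (p * (N - K))"
  define y where "y i = 1 - (m - real i) / (p * (N - real i))" for i
  have y: "real i * (1 - p) / (p * N) \<le> y i" "y i \<le> (1 + real i * (1 - p)) / (p * (N - K))"
    "0 \<le> y i" if "i < n" for i
    using falling_ratio_factor_bounds[OF p m _ n(2), of i] that n(1) unfolding y_def by auto
  have y_le_\<delta>: "y i \<le> \<delta>" if "i < n" for i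
  proof -
    have "real i < real n" using that by simp
    moreover have "real i * (1 - p) \<le> real i" using p by (intro mult_right_le_one_le) auto
    ultimately have "1 + real i * (1 - p) \<le> 1 + K" using n(1) by linarith
    then show ?thesis
      using y(2)[OF that] n p unfolding \<delta>_def by (smt (verit) divide_right_mono mult_pos_pos)
  qed
  have ratio: "falling_ratio p m N n = (\<Prod>i<n. 1 - y i)"
    unfolding falling_ratio_def y_def by simp
  have y_small: "0 \<le> y i \<and> y i \<le> 1/2" if "i < n" for i
    using y(3)[OF that] y_le_\<delta>[OF that] small unfolding \<delta>_def by linarith
  have "(\<Sum>i<n. y i) \<le> (\<Sum>i<n. (1 + real i * (1 - p)) / (p * (N - K)))"
    using y(2) by (intro sum_mono) auto
  also have "\<dots> = (real n + (1 - p) * (real n * (real n - 1) / 2)) / (p * (N - K))"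
    by (simp add: sum_divide_distrib[symmetric] sum.distrib sum_distrib_right[symmetric]
        sum_lessThan_of_nat mult.commute)
  finally have sum_upper: "(\<Sum>i<n. y i) \<le> (real n + (1 - p) * (real n * (real n - 1) / 2)) / (p * (N - K))" .
  have "(\<Sum>i<n. (y i)\<^sup>2) \<le> (\<Sum>i<n. \<delta>\<^sup>2)"
    using y(3) y_le_\<delta> by (intro sum_mono power_mono) auto
  also have "\<dots> \<le> K * \<delta>\<^sup>2" using n(1) by (simp add: mult_right_mono)
  finally have squares: "(\<Sum>i<n. (y i)\<^sup>2) \<le> K * \<delta>\<^sup>2" .
  have "(1 - p) * (real n * (real n - 1) / 2) / (p * N) = (\<Sum>i<n. real i * (1 - p) / (p * N))"
    by (simp add: sum_divide_distrib[symmetric] sum_distrib_right[symmetric] sum_lessThan_of_nat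
        mult.commute)
  also have "\<dots> \<le> (\<Sum>i<n. y i)" using y(1) by (intro sum_mono) auto
  finally have sum_lower: "(1 - p) * (real n * (real n - 1) / 2) / (p * N) \<le> (\<Sum>i<n. y i)" .
  have "- ((real n + (1 - p) * (real n * (real n - 1) / 2)) / (p * (N - K))) - 2 * K * \<delta>\<^sup>2
      \<le> - (\<Sum>i<n. y i) - 2 * (\<Sum>i<n. (y i)\<^sup>2)"
    using sum_upper squares by linarith
  then have "exp (- ((real n + (1 - p) * (real n * (real n - 1) / 2)) / (p * (N - K))) - 2 * K * \<delta>\<^sup>2)
      \<le> exp (- (\<Sum>i<n. y i) - 2 * (\<Sum>i<n. (y i)\<^sup>2))"
    by (simp only: exp_le_cancel_iff)
  also have "\<dots> \<le> falling_ratio p m N n"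
    unfolding ratio by (rule prod_one_minus_exp_bounds(1)) (use y_small in blast)
  finally show "exp (- ((real n + (1 - p) * (real n * (real n - 1) / 2)) / (p * (N - K)))
            - 2 * K * ((1 + K) / (p * (N - K)))\<^sup>2) \<le> falling_ratio p m N n"
    unfolding \<delta>_def .
  show "falling_ratio p m N n \<le> exp (- ((1 - p) * (real n * (real n - 1) / 2) / (p * N)))"
  proof -
    have "falling_ratio p m N n \<le> exp (- (\<Sum>i<n. y i))"
      unfolding ratio by (rule prod_one_minus_exp_bounds(2)) (use y_small in blast)
    also have "\<dots> \<le> exp (- ((1 - p) * (real n * (real n - 1) / 2) / (p * N)))"
      using sum_lower by (simp only: exp_le_cancel_iff neg_le_iff_le)
    finally show ?thesis .
  qed
qed

section \<open>The exact formula for the expectation\<close>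

definition arc_count :: "nat \<Rightarrow> real \<Rightarrow> nat \<Rightarrow> nat" where
  "arc_count l p k = nat \<lfloor>p * real (k\<^sup>2 * l)\<rfloor>"

lemma arc_count_bounds:
  assumes "0 \<le> p"
  shows "real (arc_count l p k) \<le> p * real (k\<^sup>2 * l)"
    and "p * real (k\<^sup>2 * l) - 1 \<le> real (arc_count l p k)"
proof -
  have "0 \<le> p * real (k\<^sup>2 * l)" using assms by simp
  then show "real (arc_count l p k) \<le> p * real (k\<^sup>2 * l)"
    and "p * real (k\<^sup>2 * l) - 1 \<le> real (arc_count l p k)"
    unfolding arc_count_def by linarith+
qed

lemma arc_count_le:
  assumes "0 \<le> p" "p \<le> 1"
  shows "arc_count l p k \<le> k\<^sup>2 * l"
proof -
  have "real (arc_count l p k) \<le> real (k\<^sup>2 * l)"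
    using arc_count_bounds(1)[OF assms(1), of l k] assms mult_left_le_one_le[of "real (k\<^sup>2 * l)" p]
    by linarith
  then show ?thesis by (simp only: of_nat_le_iff)
qed

lemma eventually_arc_count_ge:
  assumes "0 < p" "0 < l"
  shows "eventually (\<lambda>k. k * l \<le> arc_count l p k) at_top"
proof -
  have "filterlim (\<lambda>k. p * real k ^ 2 * real l - 1 - real k * real l) at_top at_top"
    using assms by real_asymp
  then have "eventually (\<lambda>k. 0 \<le> p * real k ^ 2 * real l - 1 - real k * real l) at_top"
    by (rule filterlim_at_top[THEN iffD1, rule_format])
  then show ?thesis
  proof eventually_elim
    case (elim k)
    moreover have "p * real (k\<^sup>2 * l) - 1 \<le> real (arc_count l p k)"
      using assms by (intro arc_count_bounds) simp
    ultimately have "real (k * l) \<le> real (arc_count l p k)"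
      by (simp add: algebra_simps)
    then show ?case by (simp only: of_nat_le_iff)
  qed
qed

lemma EY_eq_sum_moving:
  assumes l: "2 \<le> l" and p: "0 < p" "p < 1" and km: "k * l \<le> arc_count l p k"
  shows "EY l p k = (\<Sum>s\<le>k. (fact k / fact (k - s)) ^ l
    * (p ^ (l * s) * falling_ratio p (real (arc_count l p k)) (real (k\<^sup>2 * l)) (l * s)))"
proof -
  let ?m = "arc_count l p k" and ?N = "k\<^sup>2 * l"
  define h where "h c = real ((?N - c) choose (?m - c)) / real (?N choose ?m)" for c
  have mN: "?m \<le> ?N" using p by (intro arc_count_le) auto
  have "EY l p k = (\<Sum>f\<in>Dperms k l. h (card (moved (Dverts k l) f)))"
    using expectation_card_digraph_perms[OF finite_Dverts[of k l] Darcs_subset[of k l], where m = ?m]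
      km mN card_Darcs[of l k] l
    unfolding EY_def subgraphs_m_def arc_count_def[symmetric] h_def
    by (simp add: card_Dverts sum_divide_distrib)
  also have "\<dots> = (\<Sum>s\<le>k. real ((k choose s) ^ l * fact s ^ l) * h (l * s))"
    by (rule sum_Dperms_moved[OF l])
  also have "\<dots> = (\<Sum>s\<le>k. (fact k / fact (k - s)) ^ l
      * (p ^ (l * s) * falling_ratio p (real ?m) (real ?N) (l * s)))"
  proof (rule sum.cong[OF refl])
    fix s assume "s \<in> {..k}"
    then have "l * s \<le> ?m" using km by (metis atMost_iff le_trans mult.commute mult_le_mono2)
    then have "h (l * s) = p ^ (l * s) * falling_ratio p (real ?m) (real ?N) (l * s)"
      using binomial_ratio_eq_prod[OF _ mN] prod_ratio_eq_falling_ratio[of p] p unfolding h_def by simp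
    moreover have "real ((k choose s) ^ l * fact s ^ l) = (fact k / fact (k - s)) ^ l"
      using \<open>s \<in> {..k}\<close> by (simp add: power_mult_distrib[symmetric] binomial_fact)
    ultimately show "real ((k choose s) ^ l * fact s ^ l) * h (l * s) = (fact k / fact (k - s)) ^ l
        * (p ^ (l * s) * falling_ratio p (real ?m) (real ?N) (l * s))" by simp
  qed
  finally show ?thesis .
qed

lemma EY_eq:
  assumes l: "2 \<le> l" and p: "0 < p" "p < 1" and km: "k * l \<le> arc_count l p k"
  shows "EY l p k = fact k ^ l * p ^ (k * l) * (\<Sum>t\<le>k. ((1 / p) ^ t / fact t) ^ l
    * falling_ratio p (real (arc_count l p k)) (real (k\<^sup>2 * l)) ((k - t) * l))"
proof -
  let ?R = "falling_ratio p (real (arc_count l p k)) (real (k\<^sup>2 * l))"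
  have "EY l p k = (\<Sum>t\<le>k. (fact k / fact (k - (k - t))) ^ l * (p ^ (l * (k - t)) * ?R (l * (k - t))))"
    unfolding EY_eq_sum_moving[OF assms]
    by (rule sum.reindex_bij_witness[where i = "\<lambda>t. k - t" and j = "\<lambda>t. k - t"]) auto
  also have "\<dots> = (\<Sum>t\<le>k. fact k ^ l * p ^ (k * l) * (((1 / p) ^ t / fact t) ^ l * ?R ((k - t) * l)))"
  proof (rule sum.cong[OF refl])
    fix t assume "t \<in> {..k}"
    then have "k - (k - t) = t" and "p ^ (k * l) = p ^ (l * (k - t)) * p ^ (t * l)"
      by (auto simp: power_add[symmetric] algebra_simps diff_mult_distrib2)
    then show "(fact k / fact (k - (k - t))) ^ l * (p ^ (l * (k - t)) * ?R (l * (k - t)))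
        = fact k ^ l * p ^ (k * l) * (((1 / p) ^ t / fact t) ^ l * ?R ((k - t) * l))"
      using p by (simp add: power_divide power_mult_distrib power_mult[symmetric] mult.commute[of t l]
          mult.commute[of "k - t" l] field_simps)
  qed
  finally show ?thesis by (simp add: sum_distrib_left)
qed

section \<open>Asymptotics\<close>

lemma tendsto_falling_ratio_arc_count:
  assumes p: "0 < p" "p < 1" and l: "0 < l"
  shows "(\<lambda>k. falling_ratio p (real (arc_count l p k)) (real (k\<^sup>2 * l)) ((k - t) * l))
    \<longlonglongrightarrow> exp (real l / 2 * (1 - 1 / p))"
proof -
  let ?R = "\<lambda>k. falling_ratio p (real (arc_count l p k)) (real (k\<^sup>2 * l)) ((k - t) * l)"
  define n where "n = (\<lambda>k::nat. (real k - real t) * real l)"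
  define K where "K = (\<lambda>k::nat. real k * real l)"
  define N where "N = (\<lambda>k::nat. real k * real k * real l)"
  define \<delta> where "\<delta> = (\<lambda>k. (1 + K k) / (p * (N k - K k)))"
  define lower where "lower = (\<lambda>k. exp (- ((n k + (1 - p) * (n k * (n k - 1) / 2)) / (p * (N k - K k)))
    - 2 * K k * (\<delta> k)\<^sup>2))"
  define upper where "upper = (\<lambda>k. exp (- ((1 - p) * (n k * (n k - 1) / 2) / (p * N k))))"
  have "real l > 0" using l by simp
  have limit: "exp (real l / 2 * (1 - 1 / p)) = exp (- ((1 - p) * real l / (2 * p)))"
    using p by (simp add: field_simps)
  have lower_lim: "lower \<longlonglongrightarrow> exp (- ((1 - p) * real l / (2 * p)))"
    unfolding lower_def n_def K_def N_def \<delta>_def using \<open>real l > 0\<close> p by (real_asymp simp: field_simps)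
  have upper_lim: "upper \<longlonglongrightarrow> exp (- ((1 - p) * real l / (2 * p)))"
    unfolding upper_def n_def N_def using \<open>real l > 0\<close> p by (real_asymp simp: field_simps)
  have "\<delta> \<longlonglongrightarrow> 0"
    unfolding \<delta>_def K_def N_def using \<open>real l > 0\<close> p by (real_asymp simp: field_simps)
  then have "eventually (\<lambda>k. \<delta> k \<le> 1/2) at_top"
    by (intro eventually_mono[OF order_tendstoD(2)[of _ 0 _ "1/2"]]) auto
  then have bounds: "eventually (\<lambda>k. lower k \<le> ?R k \<and> ?R k \<le> upper k) at_top"
    using eventually_ge_at_top[of "max t 2"]
  proof eventually_elim
    case (elim k)
    have n_eq: "real ((k - t) * l) = n k" and N_eq: "real (k\<^sup>2 * l) = N k"
      using elim unfolding n_def N_def by (auto simp: of_nat_diff power2_eq_square)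
    have "real ((k - t) * l) \<le> K k" "K k < real (k\<^sup>2 * l)"
      using elim \<open>real l > 0\<close> unfolding n_eq N_eq n_def K_def N_def by auto
    note bounds = falling_ratio_bounds[OF p(1) less_imp_le[OF p(2)]
        arc_count_bounds[where l = l and k = k and p = p, OF less_imp_le[OF p(1)]] this]
    have "(1 + K k) / (p * (real (k\<^sup>2 * l) - K k)) \<le> 1/2"
      using elim(1) unfolding \<delta>_def N_eq .
    from bounds[OF this] show ?case
      unfolding lower_def upper_def \<delta>_def n_eq N_eq by blast
  qed
  have "eventually (\<lambda>k. lower k \<le> ?R k) at_top" "eventually (\<lambda>k. ?R k \<le> upper k) at_top"
    using bounds by (auto elim: eventually_mono)
  then show ?thesis unfolding limit by (rule tendsto_sandwich[OF _ _ lower_lim upper_lim])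
qed

lemma summable_power_exp_terms:
  fixes x :: real
  assumes "0 \<le> x" "1 \<le> l"
  shows "summable (\<lambda>t. (x ^ t / fact t) ^ l)"
proof (rule summable_comparison_test_ev)
  show "summable (\<lambda>t. x ^ t / fact t)" using summable_exp[of x] by (simp add: field_simps)
  then have "eventually (\<lambda>t. x ^ t / fact t < 1) at_top"
    by (intro order_tendstoD(2)[OF summable_LIMSEQ_zero]) simp_all
  then show "eventually (\<lambda>t. norm ((x ^ t / fact t) ^ l) \<le> x ^ t / fact t) at_top"
  proof (rule eventually_mono)
    fix t assume "x ^ t / fact t < 1"
    then have "(x ^ t / fact t) ^ l \<le> (x ^ t / fact t) ^ 1"
      using assms by (intro power_decreasing) auto
    then show "norm ((x ^ t / fact t) ^ l) \<le> x ^ t / fact t" using assms by simp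
  qed
qed

lemma f_ell_eq_suminf: "f_ell l x = (\<Sum>t. (x ^ t / fact t) ^ l)"
  unfolding f_ell_def by (simp add: power_divide power_mult)

lemma f_ell_pos:
  assumes "0 \<le> x" "1 \<le> l"
  shows "0 < f_ell l x"
proof -
  have "(\<Sum>t<1. (x ^ t / fact t) ^ l) \<le> f_ell l x"
    unfolding f_ell_eq_suminf using assms by (intro sum_le_suminf summable_power_exp_terms) auto
  then show ?thesis by simp
qed

lemma tendsto_EY_normalized_sum:
  assumes l: "2 \<le> l" and p: "0 < p" "p < 1"
  shows "(\<lambda>k. \<Sum>t\<le>k. ((1 / p) ^ t / fact t) ^ l
      * falling_ratio p (real (arc_count l p k)) (real (k\<^sup>2 * l)) ((k - t) * l))
    \<longlonglongrightarrow> exp (real l / 2 * (1 - 1 / p)) * f_ell l (1 / p)"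
proof -
  define M where "M t = ((1 / p) ^ t / fact t) ^ l" for t :: nat
  define R where "R k n = falling_ratio p (real (arc_count l p k)) (real (k\<^sup>2 * l)) n" for k n
  define a where "a t k = (if t \<le> k then M t * R k ((k - t) * l) else 0)" for t k
  let ?c = "exp (real l / 2 * (1 - 1 / p))"
  have M_nonneg: "0 \<le> M t" for t unfolding M_def using p by simp
  have "(\<lambda>k. a t k) \<longlonglongrightarrow> M t * ?c" for t
  proof (rule Lim_transform_eventually)
    show "(\<lambda>k. M t * R k ((k - t) * l)) \<longlonglongrightarrow> M t * ?c"
      unfolding R_def using p l by (intro tendsto_mult tendsto_const tendsto_falling_ratio_arc_count) auto
    show "eventually (\<lambda>k. M t * R k ((k - t) * l) = a t k) at_top"
      using eventually_ge_at_top[of t] by eventually_elim (simp add: a_def)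
  qed
  moreover have "eventually (\<lambda>(t, k). norm (a t k) \<le> M t) (at_top \<times>\<^sub>F at_top)"
  proof -
    have "eventually (\<lambda>k. k * l \<le> arc_count l p k) at_top"
      using p l by (intro eventually_arc_count_ge) auto
    then have "eventually (\<lambda>k. \<forall>t. norm (a t k) \<le> M t) at_top"
    proof eventually_elim
      case (elim k)
      have "0 \<le> R k ((k - t) * l) \<and> R k ((k - t) * l) \<le> 1" for t
      proof -
        have "(k - t) * l \<le> arc_count l p k" using elim by (meson diff_le_self le_trans mult_le_mono1)
        then have "real ((k - t) * l) \<le> real (arc_count l p k)" by (simp only: of_nat_le_iff)
        then show ?thesis
          using falling_ratio_nonneg_le_one[OF p(1) less_imp_le[OF p(2)]
              arc_count_bounds(1)[where l = l and k = k, OF less_imp_le[OF p(1)]]]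
          unfolding R_def by blast
      qed
      then show ?case
        using M_nonneg unfolding a_def by (simp add: abs_mult mult_left_le)
    qed
    then have "eventually (\<lambda>(_ :: nat, k). \<forall>t. norm (a t k) \<le> M t) (at_top \<times>\<^sub>F at_top)"
      by (subst eventually_prod2) simp_all
    then show ?thesis by (rule eventually_mono) auto
  qed
  moreover have "summable M"
    unfolding M_def using summable_power_exp_terms[of "1 / p" l] p l by simp
  ultimately have "(\<lambda>k. suminf (\<lambda>t. a t k)) \<longlonglongrightarrow> (\<Sum>t. M t * ?c)"
    using tannerys_theorem[of a "\<lambda>t. M t * ?c"] by auto
  moreover have "suminf (\<lambda>t. a t k) = (\<Sum>t\<le>k. M t * R k ((k - t) * l))" for k
    by (subst suminf_finite[of "{..k}"]) (auto simp: a_def)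
  moreover have "(\<Sum>t. M t * ?c) = ?c * f_ell l (1 / p)"
    using suminf_mult2[OF \<open>summable M\<close>, of ?c] unfolding f_ell_eq_suminf M_def by (simp add: mult.commute)
  ultimately show ?thesis unfolding M_def R_def by simp
qed

theorem mainTheorem6:
  fixes l :: nat and p :: real
  assumes "l \<ge> 2" and "0 < p" and "p < 1"
  shows "(\<lambda>k. EY l p k) \<sim>[at_top]
    (\<lambda>k. (fact k) ^ l * p ^ (k * l) * exp (real l / 2 * (1 - 1 / p)) * f_ell l (1 / p))"
proof -
  let ?S = "\<lambda>k. \<Sum>t\<le>k. ((1 / p) ^ t / fact t) ^ l
    * falling_ratio p (real (arc_count l p k)) (real (k\<^sup>2 * l)) ((k - t) * l)"
  have "(\<lambda>k. EY l p k) \<sim>[at_top] (\<lambda>k. fact k ^ l * p ^ (k * l) * ?S k)"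
  proof (intro asymp_equiv_refl_ev)
    have "eventually (\<lambda>k. k * l \<le> arc_count l p k) at_top"
      using assms by (intro eventually_arc_count_ge) auto
    then show "eventually (\<lambda>k. EY l p k = fact k ^ l * p ^ (k * l) * ?S k) at_top"
      by eventually_elim (use EY_eq assms in simp)
  qed
  also have "\<dots> \<sim>[at_top] (\<lambda>k. fact k ^ l * p ^ (k * l) * (exp (real l / 2 * (1 - 1 / p)) * f_ell l (1 / p)))"
    using f_ell_pos[of "1 / p" l] assms
    by (intro asymp_equiv_mult asymp_equiv_refl tendsto_imp_asymp_equiv_const
        tendsto_EY_normalized_sum) auto
  finally show ?thesis by (simp add: mult.assoc)
qed

end
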